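(* In the discrete setting of the context, consider $$\widetilde{\mathbf{P}}^{-1}\frac{d\mathbf{Q}}{dt}=\sum_{\xi}D_{-\xi}\,\mathbf{F}_\xi(\mathbf{Q})+\sum_{\xi}\mathbf{B}^h_\xi(\mathbf{Q})+\sum_{\xi}\big(\mathbf{SAT}_{\xi,0}+\mathbf{SAT}_{\xi,n_\xi}\big),$$ where, for $a\in\{0,n_\xi\}$, $\mathbf{SAT}_{\xi,a}$ vanishes except at grid points with $\xi$-index $a$, where it equals $-\frac{1}{h^{(\xi)}_a}J\sqrt{\xi_x^2+\xi_y^2+\xi_z^2}\,\mathbf{s}_a$ with $$\mathbf{s}_0=\big(G_x,G_y,G_z,-n_x\widetilde G_x,-n_y\widetilde G_y,-n_z\widetilde G_z,-(n_y\widetilde G_x+n_x\widetilde G_y),-(n_z\widetilde G_x+n_x\widetilde G_z),-(n_z\widetilde G_y+n_y\widetilde G_z)\big)^T,$$ $$\mathbf{s}_{n_\xi}=\big(G_x,G_y,G_z,n_x\widetilde G_x,n_y\widetilde G_y,n_z\widetilde G_z,n_y\widetilde G_x+n_x\widetilde G_y,n_z\widetilde G_x+n_x\widetilde G_z,n_z\widetilde G_y+n_y\widetilde G_z\big)^T,$$ and $\mathbf{G},\widetilde{\mathbf{G}}$ are the penalty vectors defined in the context (computed at that face point). Then every differentiable solution satisfies $$\frac{dE_h}{dt}=F_{luc}+\sum_{\xi\in\{q,r,s\}}\Big(\mathbb{I}_{\xi,n_\xi}(\widehat{\mathbf{v}}^T\widehat{\mathbf{T}})-\mathbb{I}_{\xi,0}(\widehat{\mathbf{v}}^T\widehat{\mathbf{T}})\Big)\le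 0,\qquad F_{luc}:=-\sum_{\xi\in\{q,r,s\}}\sum_{a\in\{0,n_\xi\}}\mathbb{I}_{\xi,a}\Big(\sum_{\eta\in\{n,m,l\}}\frac{G_\eta^2}{Z_\eta}\Big)\le0,$$ where $\widehat{\mathbf{v}}^T\widehat{\mathbf{T}}=\sum_{\eta}\widehat v_\eta\widehat T_\eta$.
   Context: Discrete setting: for $\xi\in\{q,r,s\}$ fix $n_\xi\ge1$, a diagonal matrix $H_\xi=\mathrm{diag}(h^{(\xi)}_0,\dots,h^{(\xi)}_{n_\xi})$ with positive entries, and real $(n_\xi+1)\times(n_\xi+1)$ matrices $D_{+\xi},D_{-\xi}$ with $(D_{+\xi}f)^TH_\xi g+f^TH_\xi(D_{-\xi}g)=f_{n_\xi}g_{n_\xi}-f_0g_0$ for all $f,g\in\mathbb{R}^{n_\xi+1}$. A 3D grid function $f=(f_{ijk})$ has $0\le i\le n_q$, $0\le j\le n_r$, $0\le k\le n_s$; $D_{\pm q}$ acts on the index $i$, i.e. $(D_{\pm q}f)_{ijk}=\sum_{i'}(D_{\pm q})_{ii'}f_{i'jk}$, and similarly $D_{\pm r}$ on $j$ and $D_{\pm s}$ on $k$; applied to vector-valued grid functions they act componentwise. Given are grid functions $J_{ijk}>0$, for each $\xi$ metric values $(\xi_x,\xi_y,\xi_z)_{ijk}\in\mathbb{R}^3\setminus\{0\}$, density $\rho_{ijk}>0$ and symmetric positive definite $6\times6$ compliance matrices $\mathbf{S}_{ijk}$; $\widetilde{\mathbf{P}}^{-1}_{ijk}=J_{ijk}\,\mathrm{diag}(\rho_{ijk}I_3,\mathbf{S}_{ijk})$.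 The unknown is $\mathbf{Q}_{ijk}=(\mathbf{v},\boldsymbol\sigma)_{ijk}$ with $\mathbf{v}=(v_x,v_y,v_z)$, $\boldsymbol\sigma=(\sigma_{xx},\sigma_{yy},\sigma_{zz},\sigma_{xy},\sigma_{xz},\sigma_{yz})$, and $\boldsymbol\sigma_{\mathrm{mat}}$ the symmetric $3\times3$ stress matrix. Pointwise flux: $\mathbf{F}_\xi(\mathbf{Q})$ has first three entries $J(\xi_x\sigma_{xx}+\xi_y\sigma_{xy}+\xi_z\sigma_{xz})$, $J(\xi_x\sigma_{xy}+\xi_y\sigma_{yy}+\xi_z\sigma_{yz})$, $J(\xi_x\sigma_{xz}+\xi_y\sigma_{yz}+\xi_z\sigma_{zz})$ and last six entries $0$. Discrete non-conservative term: with $w_\alpha=D_{+\xi}v_\alpha$, $\mathbf{B}^h_\xi(\mathbf{Q})$ has first three entries $0$ and entries 4–9 equal to $J\xi_xw_x$, $J\xi_yw_y$, $J\xi_zw_z$, $J(\xi_yw_x+\xi_xw_y)$, $J(\xi_zw_x+\xi_xw_z)$, $J(\xi_zw_y+\xi_yw_z)$. Discrete energy: $E_h=\frac12\sum_{i,j,k}h^{(q)}_ih^{(r)}_jh^{(s)}_k\,\mathbf{Q}_{ijk}^T\widetilde{\mathbf{P}}^{-1}_{ijk}\mathbf{Q}_{ijk}$. Face cubature: for $a\in\{0,n_q\}$, $\mathbb{I}_{q,a}(f)=\sum_{j,k}h^{(r)}_jh^{(s)}_k\,J_{ajk}\sqrt{q_x^2+q_y^2+q_z^2}\big|_{ajk}\,f_{ajk}$;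 analogously $\mathbb{I}_{r,a}(f)=\sum_{i,k}h^{(q)}_ih^{(s)}_kJ_{iak}\sqrt{r_x^2+r_y^2+r_z^2}|_{iak}f_{iak}$ for $a\in\{0,n_r\}$ and $\mathbb{I}_{s,a}(f)=\sum_{i,j}h^{(q)}_ih^{(r)}_jJ_{ija}\sqrt{s_x^2+s_y^2+s_z^2}|_{ija}f_{ija}$ for $a\in\{0,n_s\}$. Boundary data at each grid point on a face of direction $\xi$ with index $a\in\{0,n_\xi\}$: $\mathbf{n}=(n_x,n_y,n_z)^T=(\xi_x,\xi_y,\xi_z)^T/\sqrt{\xi_x^2+\xi_y^2+\xi_z^2}$, $\mathbf{T}=\boldsymbol\sigma_{\mathrm{mat}}\mathbf{n}$; $(\mathbf{n},\mathbf{m},\mathbf{l})$ is any orthonormal basis of $\mathbb{R}^3$, $\mathbf{R}$ the orthogonal matrix with rows $\mathbf{n}^T,\mathbf{m}^T,\mathbf{l}^T$, $v_\eta=(\mathbf{R}\mathbf{v})_\eta$, $T_\eta=(\mathbf{R}\mathbf{T})_\eta$, $\eta\in\{n,m,l\}$. Given impedances $Z_\eta>0$ and parameters $\gamma_\eta\in[-1,1]$ (prescribing the boundary conditions $\frac{Z_\eta}{2}(1-\gamma_\eta)v_\eta\mp\frac{1+\gamma_\eta}{2}T_\eta=0$, with $-$ at index $0$ and $+$ at index $n_\xi$). Hat variables: at index $0$, with $q_\eta=\frac12(Z_\eta v_\eta+T_\eta)$, $\widehat v_\eta=(1+\gamma_\eta)q_\eta/Z_\eta$, $\widehat T_\eta=(1-\gamma_\eta)q_\eta$;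 at index $n_\xi$, with $p_\eta=\frac12(Z_\eta v_\eta-T_\eta)$, $\widehat v_\eta=(1+\gamma_\eta)p_\eta/Z_\eta$, $\widehat T_\eta=-(1-\gamma_\eta)p_\eta$. Penalties: $G_\eta=\frac12Z_\eta(v_\eta-\widehat v_\eta)-\frac12(T_\eta-\widehat T_\eta)$ at index $0$, $G_\eta=\frac12Z_\eta(v_\eta-\widehat v_\eta)+\frac12(T_\eta-\widehat T_\eta)$ at index $n_\xi$; $\widetilde G_\eta=G_\eta/Z_\eta$; and $\mathbf{G}=(G_x,G_y,G_z)^T=\mathbf{R}^T(G_n,G_m,G_l)^T$, $\widetilde{\mathbf{G}}=(\widetilde G_x,\widetilde G_y,\widetilde G_z)^T=\mathbf{R}^T(\widetilde G_n,\widetilde G_m,\widetilde G_l)^T$. *)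

theory Defs
  imports "HOL-Analysis.Analysis"
begin

text \<open>Components of the unknown:
  0,1,2 = v_x,v_y,v_z ; 3..8 = sigma_xx, sigma_yy, sigma_zz, sigma_xy, sigma_xz, sigma_yz.
  Spatial components x,y,z are indexed 0,1,2; rotated components n,m,l are indexed 0,1,2.\<close>

type_synonym pt = "nat \<times> nat \<times> nat"

datatype dir = Dq | Dr | Ds

fun coord :: "dir \<Rightarrow> pt \<Rightarrow> nat" where
  "coord Dq (i,j,k) = i" | "coord Dr (i,j,k) = j" | "coord Ds (i,j,k) = k"

fun setc :: "dir \<Rightarrow> pt \<Rightarrow> nat \<Rightarrow> pt" where
  "setc Dq (i,j,k) a = (a,j,k)" | "setc Dr (i,j,k) a = (i,a,k)" | "setc Ds (i,j,k) a = (i,j,a)"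

definition sumdir :: "(dir \<Rightarrow> real) \<Rightarrow> real" where
  "sumdir g = g Dq + g Dr + g Ds"

record setting =
  nn  :: "dir \<Rightarrow> nat"
  hh  :: "dir \<Rightarrow> nat \<Rightarrow> real"               (* diagonal entries of H_xi *)
  Dp  :: "dir \<Rightarrow> nat \<Rightarrow> nat \<Rightarrow> real"
  Dm  :: "dir \<Rightarrow> nat \<Rightarrow> nat \<Rightarrow> real"
  Jac :: "pt \<Rightarrow> real"
  met :: "dir \<Rightarrow> pt \<Rightarrow> nat \<Rightarrow> real"
  rho :: "pt \<Rightarrow> real"
  Sc  :: "pt \<Rightarrow> nat \<Rightarrow> nat \<Rightarrow> real"         (* 6x6 compliance matrix *)
  Zi  :: "dir \<Rightarrow> nat \<Rightarrow> pt \<Rightarrow> nat \<Rightarrow> real"  (* impedance Z_eta at face (xi,a), point *)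
  gam :: "dir \<Rightarrow> nat \<Rightarrow> pt \<Rightarrow> nat \<Rightarrow> real"
  mfr :: "dir \<Rightarrow> nat \<Rightarrow> pt \<Rightarrow> nat \<Rightarrow> real"
  lfr :: "dir \<Rightarrow> nat \<Rightarrow> pt \<Rightarrow> nat \<Rightarrow> real"

definition grid :: "setting \<Rightarrow> pt set" where
  "grid S = {p. \<forall>d. coord d p \<le> nn S d}"

definition matv :: "(nat \<Rightarrow> nat \<Rightarrow> real) \<Rightarrow> nat \<Rightarrow> (nat \<Rightarrow> real) \<Rightarrow> nat \<Rightarrow> real" where
  "matv M N f i = (\<Sum>i'\<le>N. M i i' * f i')"

definition applyD :: "setting \<Rightarrow> (nat \<Rightarrow> nat \<Rightarrow> real) \<Rightarrow> dir \<Rightarrow> (pt \<Rightarrow> real) \<Rightarrow> pt \<Rightarrow> real" where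
  "applyD S M d f p = (\<Sum>i'\<le>nn S d. M (coord d p) i' * f (setc d p i'))"

definition hprod :: "setting \<Rightarrow> pt \<Rightarrow> real" where
  "hprod S p = hh S Dq (coord Dq p) * hh S Dr (coord Dr p) * hh S Ds (coord Ds p)"

fun hother :: "setting \<Rightarrow> dir \<Rightarrow> pt \<Rightarrow> real" where
  "hother S Dq p = hh S Dr (coord Dr p) * hh S Ds (coord Ds p)"
| "hother S Dr p = hh S Dq (coord Dq p) * hh S Ds (coord Ds p)"
| "hother S Ds p = hh S Dq (coord Dq p) * hh S Dr (coord Dr p)"

definition mnorm :: "setting \<Rightarrow> dir \<Rightarrow> pt \<Rightarrow> real" where
  "mnorm S d p = sqrt (\<Sum>c<3. (met S d p c)\<^sup>2)"

definition face_int :: "setting \<Rightarrow> dir \<Rightarrow> nat \<Rightarrow> (pt \<Rightarrow> real) \<Rightarrow> real" where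
  "face_int S d a f = (\<Sum>p\<in>{p\<in>grid S. coord d p = a}. hother S d p * Jac S p * mnorm S d p * f p)"

definition smat :: "(pt \<Rightarrow> nat \<Rightarrow> real) \<Rightarrow> pt \<Rightarrow> nat \<Rightarrow> nat \<Rightarrow> real" where
  "smat Q p a b =
     (if a = b then Q p (3 + a)
      else if {a,b} = {0,1} then Q p 6
      else if {a,b} = {0,2} then Q p 7
      else Q p 8)"

definition nvec :: "setting \<Rightarrow> dir \<Rightarrow> pt \<Rightarrow> nat \<Rightarrow> real" where
  "nvec S d p c = met S d p c / mnorm S d p"

definition frame :: "setting \<Rightarrow> dir \<Rightarrow> nat \<Rightarrow> pt \<Rightarrow> nat \<Rightarrow> nat \<Rightarrow> real" where
  "frame S d a p \<eta> c = (if \<eta> = 0 then nvec S d p c else if \<eta> = 1 then mfr S d a p c else lfr S d a p c)"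

definition tvec :: "setting \<Rightarrow> (pt \<Rightarrow> nat \<Rightarrow> real) \<Rightarrow> dir \<Rightarrow> pt \<Rightarrow> nat \<Rightarrow> real" where
  "tvec S Q d p c = (\<Sum>b<3. smat Q p c b * nvec S d p b)"

definition vrot :: "setting \<Rightarrow> (pt \<Rightarrow> nat \<Rightarrow> real) \<Rightarrow> dir \<Rightarrow> nat \<Rightarrow> pt \<Rightarrow> nat \<Rightarrow> real" where
  "vrot S Q d a p \<eta> = (\<Sum>c<3. frame S d a p \<eta> c * Q p c)"

definition trot :: "setting \<Rightarrow> (pt \<Rightarrow> nat \<Rightarrow> real) \<Rightarrow> dir \<Rightarrow> nat \<Rightarrow> pt \<Rightarrow> nat \<Rightarrow> real" where
  "trot S Q d a p \<eta> = (\<Sum>c<3. frame S d a p \<eta> c * tvec S Q d p c)"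

text \<open>Characteristic q_eta (at index 0) resp. p_eta (at index n_xi).\<close>
definition charv :: "setting \<Rightarrow> (pt \<Rightarrow> nat \<Rightarrow> real) \<Rightarrow> dir \<Rightarrow> nat \<Rightarrow> pt \<Rightarrow> nat \<Rightarrow> real" where
  "charv S Q d a p \<eta> =
     (if a = 0 then (Zi S d a p \<eta> * vrot S Q d a p \<eta> + trot S Q d a p \<eta>) / 2
      else (Zi S d a p \<eta> * vrot S Q d a p \<eta> - trot S Q d a p \<eta>) / 2)"

definition vhat :: "setting \<Rightarrow> (pt \<Rightarrow> nat \<Rightarrow> real) \<Rightarrow> dir \<Rightarrow> nat \<Rightarrow> pt \<Rightarrow> nat \<Rightarrow> real" where
  "vhat S Q d a p \<eta> = (1 + gam S d a p \<eta>) * charv S Q d a p \<eta> / Zi S d a p \<eta>"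

definition That :: "setting \<Rightarrow> (pt \<Rightarrow> nat \<Rightarrow> real) \<Rightarrow> dir \<Rightarrow> nat \<Rightarrow> pt \<Rightarrow> nat \<Rightarrow> real" where
  "That S Q d a p \<eta> =
     (if a = 0 then (1 - gam S d a p \<eta>) * charv S Q d a p \<eta>
      else - ((1 - gam S d a p \<eta>) * charv S Q d a p \<eta>))"

definition Gpen :: "setting \<Rightarrow> (pt \<Rightarrow> nat \<Rightarrow> real) \<Rightarrow> dir \<Rightarrow> nat \<Rightarrow> pt \<Rightarrow> nat \<Rightarrow> real" where
  "Gpen S Q d a p \<eta> =
     (if a = 0 then Zi S d a p \<eta> * (vrot S Q d a p \<eta> - vhat S Q d a p \<eta>) / 2
                    - (trot S Q d a p \<eta> - That S Q d a p \<eta>) / 2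
      else Zi S d a p \<eta> * (vrot S Q d a p \<eta> - vhat S Q d a p \<eta>) / 2
                    + (trot S Q d a p \<eta> - That S Q d a p \<eta>) / 2)"

definition Gtil :: "setting \<Rightarrow> (pt \<Rightarrow> nat \<Rightarrow> real) \<Rightarrow> dir \<Rightarrow> nat \<Rightarrow> pt \<Rightarrow> nat \<Rightarrow> real" where
  "Gtil S Q d a p \<eta> = Gpen S Q d a p \<eta> / Zi S d a p \<eta>"

definition Gcart :: "setting \<Rightarrow> (pt \<Rightarrow> nat \<Rightarrow> real) \<Rightarrow> dir \<Rightarrow> nat \<Rightarrow> pt \<Rightarrow> nat \<Rightarrow> real" where
  "Gcart S Q d a p c = (\<Sum>\<eta><3. frame S d a p \<eta> c * Gpen S Q d a p \<eta>)"

definition Gtcart :: "setting \<Rightarrow> (pt \<Rightarrow> nat \<Rightarrow> real) \<Rightarrow> dir \<Rightarrow> nat \<Rightarrow> pt \<Rightarrow> nat \<Rightarrow> real" where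
  "Gtcart S Q d a p c = (\<Sum>\<eta><3. frame S d a p \<eta> c * Gtil S Q d a p \<eta>)"

definition svec :: "setting \<Rightarrow> (pt \<Rightarrow> nat \<Rightarrow> real) \<Rightarrow> dir \<Rightarrow> nat \<Rightarrow> pt \<Rightarrow> nat \<Rightarrow> real" where
  "svec S Q d a p c =
     (let sg = (if a = 0 then -1 else 1 :: real);
          n = nvec S d p; G = Gcart S Q d a p; Gt = Gtcart S Q d a p in
      if c < 3 then G c
      else if c = 3 then sg * (n 0 * Gt 0)
      else if c = 4 then sg * (n 1 * Gt 1)
      else if c = 5 then sg * (n 2 * Gt 2)
      else if c = 6 then sg * (n 1 * Gt 0 + n 0 * Gt 1)
      else if c = 7 then sg * (n 2 * Gt 0 + n 0 * Gt 2)
      else if c = 8 then sg * (n 2 * Gt 1 + n 1 * Gt 2)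
      else 0)"

definition sat :: "setting \<Rightarrow> (pt \<Rightarrow> nat \<Rightarrow> real) \<Rightarrow> dir \<Rightarrow> nat \<Rightarrow> pt \<Rightarrow> nat \<Rightarrow> real" where
  "sat S Q d a p c =
     (if coord d p = a then - (1 / hh S d a) * Jac S p * mnorm S d p * svec S Q d a p c else 0)"

definition flux :: "setting \<Rightarrow> (pt \<Rightarrow> nat \<Rightarrow> real) \<Rightarrow> dir \<Rightarrow> pt \<Rightarrow> nat \<Rightarrow> real" where
  "flux S Q d p c = (if c < 3 then Jac S p * (\<Sum>b<3. met S d p b * smat Q p c b) else 0)"

definition Bterm :: "setting \<Rightarrow> (pt \<Rightarrow> nat \<Rightarrow> real) \<Rightarrow> dir \<Rightarrow> pt \<Rightarrow> nat \<Rightarrow> real" where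
  "Bterm S Q d p c =
     (let w = (\<lambda>\<alpha>. applyD S (Dp S d) d (\<lambda>q. Q q \<alpha>) p); x = met S d p; J = Jac S p in
      if c = 3 then J * x 0 * w 0
      else if c = 4 then J * x 1 * w 1
      else if c = 5 then J * x 2 * w 2
      else if c = 6 then J * (x 1 * w 0 + x 0 * w 1)
      else if c = 7 then J * (x 2 * w 0 + x 0 * w 2)
      else if c = 8 then J * (x 2 * w 1 + x 1 * w 2)
      else 0)"

definition rhs :: "setting \<Rightarrow> (pt \<Rightarrow> nat \<Rightarrow> real) \<Rightarrow> pt \<Rightarrow> nat \<Rightarrow> real" where
  "rhs S Q p c = sumdir (\<lambda>d.
      applyD S (Dm S d) d (\<lambda>q. flux S Q d q c) p + Bterm S Q d p c
      + sat S Q d 0 p c + sat S Q d (nn S d) p c)"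

text \<open>Application of P-tilde^{-1} = J diag(rho I_3, S) at a grid point.\<close>
definition pinv :: "setting \<Rightarrow> pt \<Rightarrow> (nat \<Rightarrow> real) \<Rightarrow> nat \<Rightarrow> real" where
  "pinv S p X c =
     (if c < 3 then Jac S p * rho S p * X c
      else if c < 9 then Jac S p * (\<Sum>b<6. Sc S p (c - 3) b * X (3 + b))
      else 0)"

definition energy :: "setting \<Rightarrow> (pt \<Rightarrow> nat \<Rightarrow> real) \<Rightarrow> real" where
  "energy S Q = (1/2) * (\<Sum>p\<in>grid S. hprod S p * (\<Sum>c<9. Q p c * pinv S p (Q p) c))"

definition Fluc :: "setting \<Rightarrow> (pt \<Rightarrow> nat \<Rightarrow> real) \<Rightarrow> real" where
  "Fluc S Q = - sumdir (\<lambda>d. \<Sum>a\<in>{0, nn S d}.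
      face_int S d a (\<lambda>p. \<Sum>\<eta><3. (Gpen S Q d a p \<eta>)\<^sup>2 / Zi S d a p \<eta>))"

definition bdry :: "setting \<Rightarrow> (pt \<Rightarrow> nat \<Rightarrow> real) \<Rightarrow> real" where
  "bdry S Q = sumdir (\<lambda>d.
      face_int S d (nn S d) (\<lambda>p. \<Sum>\<eta><3. vhat S Q d (nn S d) p \<eta> * That S Q d (nn S d) p \<eta>)
    - face_int S d 0 (\<lambda>p. \<Sum>\<eta><3. vhat S Q d 0 p \<eta> * That S Q d 0 p \<eta>))"

definition admissible :: "setting \<Rightarrow> bool" where
  "admissible S \<longleftrightarrow>
     (\<forall>d. 1 \<le> nn S d) \<and>
     (\<forall>d i. i \<le> nn S d \<longrightarrow> hh S d i > 0) \<and>
     (\<forall>d f g. (\<Sum>i\<le>nn S d. matv (Dp S d) (nn S d) f i * hh S d i * g i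
                          + f i * hh S d i * matv (Dm S d) (nn S d) g i)
              = f (nn S d) * g (nn S d) - f 0 * g 0) \<and>
     (\<forall>p\<in>grid S. Jac S p > 0 \<and> rho S p > 0 \<and> (\<forall>d. \<exists>c<3. met S d p c \<noteq> 0) \<and>
        (\<forall>a<6. \<forall>b<6. Sc S p a b = Sc S p b a) \<and>
        (\<forall>x. (\<exists>a<6. x a \<noteq> 0) \<longrightarrow> (\<Sum>a<6. \<Sum>b<6. x a * Sc S p a b * x b) > 0)) \<and>
     (\<forall>d a p. a \<in> {0, nn S d} \<and> p \<in> grid S \<and> coord d p = a \<longrightarrow>
        (\<forall>\<eta><3. Zi S d a p \<eta> > 0 \<and> -1 \<le> gam S d a p \<eta> \<and> gam S d a p \<eta> \<le> 1) \<and>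
        (\<forall>\<eta><3. \<forall>\<eta>'<3. (\<Sum>c<3. frame S d a p \<eta> c * frame S d a p \<eta>' c)
                          = (if \<eta> = \<eta>' then 1 else 0)))"

end

theory Submission
  imports Defs "Jordan_Normal_Form.Determinant"
begin

text \<open>
  Pairing the semi-discrete system with \<open>H Q\<close> expresses \<open>dE\<^sub>h/dt\<close> through \<open>H\<close>-weighted
  sums of \<open>Q \<cdot> rhs\<close>. The non-conservative term \<open>B\<^sup>h\<close> pairs with the stresses exactly as the
  flux pairs with \<open>D\<^sub>+ v\<close>, so the SBP property \<open>D\<^sub>+\<^sup>T H + H D\<^sub>- = e\<^sub>n e\<^sub>n\<^sup>T - e\<^sub>0 e\<^sub>0\<^sup>T\<close>
  collapses the volume terms of each direction to the traction power \<open>\<plusminus>v \<cdot> T\<close> on its two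
  faces. In the orthonormal frame \<open>(n, m, l)\<close> this power is \<open>\<Sum>\<^sub>\<eta> v\<^sub>\<eta> T\<^sub>\<eta>\<close>, and the SAT
  contributes \<open>-(G\<^sub>\<eta> v\<^sub>\<eta> \<plusminus> G\<^sub>\<eta> T\<^sub>\<eta> / Z\<^sub>\<eta>)\<close>. Eliminating \<open>v\<^sub>\<eta>\<close> and \<open>T\<^sub>\<eta>\<close> in favour of
  the characteristic variable \<open>c\<close> leaves \<open>\<plusminus>vhat\<^sub>\<eta> That\<^sub>\<eta> - G\<^sub>\<eta>\<^sup>2 / Z\<^sub>\<eta>\<close> per component,
  which is non-positive because \<open>\<plusminus>vhat\<^sub>\<eta> That\<^sub>\<eta> = -(1 - \<gamma>\<^sub>\<eta>\<^sup>2) c\<^sup>2 / Z\<^sub>\<eta>\<close>.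
\<close>

lemma orthonormal_rows_imp_orthonormal_columns:
  fixes R :: "nat \<Rightarrow> nat \<Rightarrow> real"
  assumes rows: "\<And>i j. i < n \<Longrightarrow> j < n \<Longrightarrow> (\<Sum>c<n. R i c * R j c) = (if i = j then 1 else 0)"
    and "c < n" "c' < n"
  shows "(\<Sum>i<n. R i c * R i c') = (if c = c' then 1 else 0)"
proof -
  define A :: "real Matrix.mat" where "A = Matrix.mat n n (\<lambda>(i, j). R i j)"
  define B :: "real Matrix.mat" where "B = Matrix.mat n n (\<lambda>(i, j). R j i)"
  have A: "A \<in> carrier_mat n n" and B: "B \<in> carrier_mat n n"
    by (auto simp: A_def B_def)
  have "A * B = 1\<^sub>m n"
    by (rule eq_matI) (use rows in \<open>auto simp: A_def B_def scalar_prod_def atLeast0LessThan\<close>)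
  then have "B * A = 1\<^sub>m n"
    by (rule mat_mult_left_right_inverse[OF A B])
  then have "(B * A) $$ (c, c') = 1\<^sub>m n $$ (c, c')"
    by simp
  with assms(2,3) show ?thesis
    by (simp add: A_def B_def scalar_prod_def atLeast0LessThan)
qed

lemma sum_prod_orthonormal_rows:
  fixes R :: "nat \<Rightarrow> nat \<Rightarrow> real"
  assumes rows: "\<And>i j. i < n \<Longrightarrow> j < n \<Longrightarrow> (\<Sum>c<n. R i c * R j c) = (if i = j then 1 else 0)"
  shows "(\<Sum>i<n. (\<Sum>c<n. R i c * u c) * (\<Sum>c<n. R i c * w c)) = (\<Sum>c<n. u c * w c)"
proof -
  have "(\<Sum>i<n. (\<Sum>c<n. R i c * u c) * (\<Sum>c<n. R i c * w c))
      = (\<Sum>i<n. \<Sum>c<n. \<Sum>c'<n. u c * w c' * (R i c * R i c'))"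
    by (simp add: sum_product mult_ac)
  also have "\<dots> = (\<Sum>c<n. \<Sum>i<n. \<Sum>c'<n. u c * w c' * (R i c * R i c'))"
    by (rule sum.swap)
  also have "\<dots> = (\<Sum>c<n. \<Sum>c'<n. \<Sum>i<n. u c * w c' * (R i c * R i c'))"
    by (rule sum.cong[OF refl], rule sum.swap)
  also have "\<dots> = (\<Sum>c<n. \<Sum>c'<n. if c' = c then u c * w c else 0)"
    by (intro sum.cong refl)
       (auto simp: orthonormal_rows_imp_orthonormal_columns[OF rows] simp flip: sum_distrib_left)
  finally show ?thesis
    by simp
qed

lemma coord_setc [simp]: "coord d (setc d p i) = i"
  by (cases d; cases p) auto

lemma setc_setc [simp]: "setc d (setc d p i) j = setc d p j"
  by (cases d; cases p) auto

lemma setc_coord [simp]: "setc d p (coord d p) = p"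
  by (cases d; cases p) auto

lemma hother_setc [simp]: "hother S d (setc d p i) = hother S d p"
  by (cases d; cases p) auto

lemma hprod_eq_hh_hother: "hprod S p = hh S d (coord d p) * hother S d p"
  by (cases d; cases p) (auto simp: hprod_def)

lemma all_dir_iff: "(\<forall>d. P d) \<longleftrightarrow> P Dq \<and> P Dr \<and> P Ds"
  by (metis dir.exhaust)

lemma setc_in_grid: "p \<in> grid S \<Longrightarrow> i \<le> nn S d \<Longrightarrow> setc d p i \<in> grid S"
  by (cases d; cases p) (auto simp: grid_def all_dir_iff)

lemma coord_le_nn: "p \<in> grid S \<Longrightarrow> coord d p \<le> nn S d"
  by (auto simp: grid_def)

lemma finite_grid: "finite (grid S)"
proof (rule finite_subset)
  show "grid S \<subseteq> {..nn S Dq} \<times> {..nn S Dr} \<times> {..nn S Ds}"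
    by (auto simp: grid_def all_dir_iff)
qed auto

lemma sum_grid_by_lines:
  assumes "a \<le> nn S d"
  shows "(\<Sum>p\<in>grid S. f p) = (\<Sum>p\<in>{p\<in>grid S. coord d p = a}. \<Sum>i\<le>nn S d. f (setc d p i))"
proof -
  have "(\<Sum>p\<in>{p\<in>grid S. coord d p = a}. \<Sum>i\<le>nn S d. f (setc d p i))
      = (\<Sum>(p, i)\<in>{p\<in>grid S. coord d p = a} \<times> {..nn S d}. f (setc d p i))"
    by (rule sum.cartesian_product)
  also have "\<dots> = (\<Sum>p\<in>grid S. f p)"
    by (rule sum.reindex_bij_witness[where i = "\<lambda>q. (setc d q a, coord d q)" and j = "\<lambda>(p, i). setc d p i"])
       (use assms in \<open>auto intro: setc_in_grid coord_le_nn\<close>)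
  finally show ?thesis
    by simp
qed

lemma sum_face_setc:
  assumes "a \<le> nn S d" "b \<le> nn S d"
  shows "(\<Sum>p\<in>{p\<in>grid S. coord d p = a}. f (setc d p b)) = (\<Sum>p\<in>{p\<in>grid S. coord d p = b}. f p)"
  by (rule sum.reindex_bij_witness[where i = "\<lambda>q. setc d q a" and j = "\<lambda>p. setc d p b"])
     (use assms in \<open>auto intro: setc_in_grid\<close>)

lemma applyD_setc: "applyD S M d g (setc d p i) = matv M (nn S d) (\<lambda>i'. g (setc d p i')) i"
  by (simp add: applyD_def matv_def)

lemma applyD_zero [simp]: "applyD S M d (\<lambda>q. 0) p = 0"
  by (simp add: applyD_def)

lemma
  assumes "admissible S"
  shows admissible_hh_pos: "i \<le> nn S d \<Longrightarrow> 0 < hh S d i"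
    and admissible_sbp: "(\<Sum>i\<le>nn S d. matv (Dp S d) (nn S d) f i * hh S d i * g i
                          + f i * hh S d i * matv (Dm S d) (nn S d) g i)
              = f (nn S d) * g (nn S d) - f 0 * g 0"
    and admissible_Jac_pos: "p \<in> grid S \<Longrightarrow> 0 < Jac S p"
    and admissible_met_nonzero: "p \<in> grid S \<Longrightarrow> \<exists>c<3. met S d p c \<noteq> 0"
    and admissible_Sc_sym: "p \<in> grid S \<Longrightarrow> a < 6 \<Longrightarrow> b < 6 \<Longrightarrow> Sc S p a b = Sc S p b a"
    and admissible_impedance: "a \<in> {0, nn S d} \<Longrightarrow> p \<in> grid S \<Longrightarrow> coord d p = a \<Longrightarrow> \<eta> < 3 \<Longrightarrow>
              0 < Zi S d a p \<eta> \<and> -1 \<le> gam S d a p \<eta> \<and> gam S d a p \<eta> \<le> 1"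
    and admissible_frame: "a \<in> {0, nn S d} \<Longrightarrow> p \<in> grid S \<Longrightarrow> coord d p = a \<Longrightarrow> \<eta> < 3 \<Longrightarrow> \<eta>' < 3 \<Longrightarrow>
              (\<Sum>c<3. frame S d a p \<eta> c * frame S d a p \<eta>' c) = (if \<eta> = \<eta>' then 1 else 0)"
proof -
  note parts = assms[unfolded admissible_def, THEN conjunct2]
  show "i \<le> nn S d \<Longrightarrow> 0 < hh S d i"
    using parts[THEN conjunct1] by blast
  show "(\<Sum>i\<le>nn S d. matv (Dp S d) (nn S d) f i * hh S d i * g i
                          + f i * hh S d i * matv (Dm S d) (nn S d) g i)
              = f (nn S d) * g (nn S d) - f 0 * g 0"
    using parts[THEN conjunct2, THEN conjunct1] by blast
  show "p \<in> grid S \<Longrightarrow> 0 < Jac S p"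
    and "p \<in> grid S \<Longrightarrow> \<exists>c<3. met S d p c \<noteq> 0"
    and "p \<in> grid S \<Longrightarrow> a < 6 \<Longrightarrow> b < 6 \<Longrightarrow> Sc S p a b = Sc S p b a"
    using parts[THEN conjunct2, THEN conjunct2, THEN conjunct1] by blast+
  show "a \<in> {0, nn S d} \<Longrightarrow> p \<in> grid S \<Longrightarrow> coord d p = a \<Longrightarrow> \<eta> < 3 \<Longrightarrow>
              0 < Zi S d a p \<eta> \<and> -1 \<le> gam S d a p \<eta> \<and> gam S d a p \<eta> \<le> 1"
    and "a \<in> {0, nn S d} \<Longrightarrow> p \<in> grid S \<Longrightarrow> coord d p = a \<Longrightarrow> \<eta> < 3 \<Longrightarrow> \<eta>' < 3 \<Longrightarrow>
              (\<Sum>c<3. frame S d a p \<eta> c * frame S d a p \<eta>' c) = (if \<eta> = \<eta>' then 1 else 0)"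
    using parts[THEN conjunct2, THEN conjunct2, THEN conjunct2] by blast+
qed

lemma admissible_nn_nonzero: "admissible S \<Longrightarrow> nn S d \<noteq> 0"
  unfolding admissible_def by (metis not_one_le_zero)

lemma mnorm_pos:
  assumes "admissible S" "p \<in> grid S"
  shows "0 < mnorm S d p"
proof -
  obtain c where c: "c < 3" "met S d p c \<noteq> 0"
    using admissible_met_nonzero[OF assms] by blast
  have "0 < (met S d p c)\<^sup>2"
    using c by simp
  also have "\<dots> \<le> (\<Sum>c<3. (met S d p c)\<^sup>2)"
    by (rule member_le_sum) (use c in auto)
  finally show ?thesis
    unfolding mnorm_def by simp
qed

lemma hother_pos: "admissible S \<Longrightarrow> p \<in> grid S \<Longrightarrow> 0 < hother S d p"
  by (cases d) (auto intro!: mult_pos_pos admissible_hh_pos coord_le_nn)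

lemma face_int_cong:
  "(\<And>p. p \<in> grid S \<Longrightarrow> coord d p = a \<Longrightarrow> f p = g p) \<Longrightarrow> face_int S d a f = face_int S d a g"
  unfolding face_int_def by (rule sum.cong) auto

lemma face_int_diff: "face_int S d a (\<lambda>p. f p - g p) = face_int S d a f - face_int S d a g"
  unfolding face_int_def by (simp add: right_diff_distrib sum_subtractf)

lemma face_int_cmult: "face_int S d a (\<lambda>p. c * f p) = c * face_int S d a f"
  unfolding face_int_def by (simp add: sum_distrib_left mult_ac)

lemma face_weight_pos:
  "admissible S \<Longrightarrow> p \<in> grid S \<Longrightarrow> 0 < hother S d p * Jac S p * mnorm S d p"
  by (simp add: hother_pos admissible_Jac_pos mnorm_pos)

lemma face_int_nonneg:
  assumes "admissible S" "\<And>p. p \<in> grid S \<Longrightarrow> coord d p = a \<Longrightarrow> 0 \<le> f p"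
  shows "0 \<le> face_int S d a f"
  unfolding face_int_def
  by (intro sum_nonneg mult_nonneg_nonneg less_imp_le[OF face_weight_pos[OF assms(1)]])
     (use assms(2) in auto)

lemma face_int_nonpos:
  assumes "admissible S" "\<And>p. p \<in> grid S \<Longrightarrow> coord d p = a \<Longrightarrow> f p \<le> 0"
  shows "face_int S d a f \<le> 0"
  unfolding face_int_def
  by (intro sum_nonpos mult_nonneg_nonpos less_imp_le[OF face_weight_pos[OF assms(1)]])
     (use assms(2) in auto)

text \<open>The orientation sign shared by \<open>charv\<close>, \<open>That\<close>, \<open>Gpen\<close> and \<open>svec\<close>: \<open>-1\<close> on the face with
  index \<open>0\<close>, \<open>+1\<close> on the face with index \<open>n\<^sub>\<xi> \<ge> 1\<close>.\<close>

definition outward :: "nat \<Rightarrow> real" where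
  "outward a = (if a = 0 then -1 else 1)"

lemma outward_cases: "outward a = -1 \<or> outward a = 1"
  by (simp add: outward_def)

lemma outward_0 [simp]: "outward 0 = -1"
  by (simp add: outward_def)

lemma outward_nn: "admissible S \<Longrightarrow> outward (nn S d) = 1"
  by (simp add: outward_def admissible_nn_nonzero)

lemma sum_faces: "admissible S \<Longrightarrow> (\<Sum>a\<in>{0, nn S d}. f a) = f 0 + f (nn S d)"
  using admissible_nn_nonzero[of S d] by simp

section \<open>Summation by parts on the grid\<close>

lemma grid_summation_by_parts:
  assumes adm: "admissible S"
  shows "(\<Sum>p\<in>grid S. hprod S p * (f p * applyD S (Dm S d) d g p + g p * applyD S (Dp S d) d f p))
    = (\<Sum>p\<in>{p\<in>grid S. coord d p = nn S d}. hother S d p * (f p * g p))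
      - (\<Sum>p\<in>{p\<in>grid S. coord d p = 0}. hother S d p * (f p * g p))"
proof -
  let ?n = "nn S d" and ?F0 = "{p\<in>grid S. coord d p = 0}"
  let ?line = "\<lambda>h p i. h (setc d p i)"
  have "(\<Sum>p\<in>grid S. hprod S p * (f p * applyD S (Dm S d) d g p + g p * applyD S (Dp S d) d f p))
      = (\<Sum>p\<in>?F0. hother S d p *
          (\<Sum>i\<le>?n. matv (Dp S d) ?n (?line f p) i * hh S d i * ?line g p i
                   + ?line f p i * hh S d i * matv (Dm S d) ?n (?line g p) i))"
    by (subst sum_grid_by_lines[where a = 0 and d = d], simp, intro sum.cong refl)
       (simp add: sum_distrib_left applyD_setc hprod_eq_hh_hother[of S _ d] algebra_simps)
  also have "\<dots> = (\<Sum>p\<in>?F0. hother S d (setc d p ?n) * (f (setc d p ?n) * g (setc d p ?n))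
                            - hother S d p * (f p * g p))"
  proof (intro sum.cong refl)
    fix p assume "p \<in> ?F0"
    then have "setc d p 0 = p"
      using setc_coord[of d p] by simp
    then show "hother S d p *
          (\<Sum>i\<le>?n. matv (Dp S d) ?n (?line f p) i * hh S d i * ?line g p i
                   + ?line f p i * hh S d i * matv (Dm S d) ?n (?line g p) i)
        = hother S d (setc d p ?n) * (f (setc d p ?n) * g (setc d p ?n)) - hother S d p * (f p * g p)"
      by (simp add: admissible_sbp[OF adm] right_diff_distrib)
  qed
  also have "\<dots> = (\<Sum>p\<in>{p\<in>grid S. coord d p = ?n}. hother S d p * (f p * g p))
                  - (\<Sum>p\<in>?F0. hother S d p * (f p * g p))"
    by (simp only: sum_subtractf sum_face_setc[where f = "\<lambda>p. hother S d p * (f p * g p)"])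
  finally show ?thesis .
qed

lemma sum_lessThan_3: "(\<Sum>c<(3::nat). f c) = f 0 + f 1 + (f 2 :: 'a :: comm_monoid_add)"
  by (simp add: eval_nat_numeral)

lemma sum_lessThan_6: "(\<Sum>c<(6::nat). f c) = f 0 + f 1 + f 2 + f 3 + f 4 + (f 5 :: 'a :: comm_monoid_add)"
  by (simp add: eval_nat_numeral)

lemma sum_lessThan_9:
  "(\<Sum>c<(9::nat). f c) = f 0 + f 1 + f 2 + f 3 + f 4 + f 5 + f 6 + f 7 + (f 8 :: 'a :: comm_monoid_add)"
  by (simp add: eval_nat_numeral)

lemma smat_simps [simp]:
  "smat Q p 0 0 = Q p 3" "smat Q p 1 1 = Q p 4" "smat Q p 2 2 = Q p 5"
  "smat Q p 0 1 = Q p 6" "smat Q p 1 0 = Q p 6"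
  "smat Q p 0 2 = Q p 7" "smat Q p 2 0 = Q p 7"
  "smat Q p 1 2 = Q p 8" "smat Q p 2 1 = Q p 8"
  "smat Q p (Suc 0) (Suc 0) = Q p 4" "smat Q p 0 (Suc 0) = Q p 6" "smat Q p (Suc 0) 0 = Q p 6"
  "smat Q p (Suc 0) 2 = Q p 8" "smat Q p 2 (Suc 0) = Q p 8"
  unfolding smat_def by (simp_all add: doubleton_eq_iff)

lemma pairing_flux_nonconservative:
  "(\<Sum>c<9. Q p c * (applyD S (Dm S d) d (\<lambda>q. flux S Q d q c) p + Bterm S Q d p c))
   = (\<Sum>\<alpha><3. Q p \<alpha> * applyD S (Dm S d) d (\<lambda>q. flux S Q d q \<alpha>) p
              + flux S Q d p \<alpha> * applyD S (Dp S d) d (\<lambda>q. Q q \<alpha>) p)"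
  by (simp add: sum_lessThan_9 sum_lessThan_3 flux_def Bterm_def Let_def algebra_simps)

lemma flux_pairing:
  assumes "0 < mnorm S d p"
  shows "(\<Sum>\<alpha><3. Q p \<alpha> * flux S Q d p \<alpha>) = Jac S p * mnorm S d p * (\<Sum>\<alpha><3. Q p \<alpha> * tvec S Q d p \<alpha>)"
  using assms by (simp add: sum_lessThan_3 flux_def tvec_def nvec_def field_simps)

lemma volume_rate:
  assumes adm: "admissible S"
  shows "(\<Sum>p\<in>grid S. hprod S p * (\<Sum>c<9. Q p c * (applyD S (Dm S d) d (\<lambda>q. flux S Q d q c) p + Bterm S Q d p c)))
    = (\<Sum>a\<in>{0, nn S d}. outward a * face_int S d a (\<lambda>p. \<Sum>\<alpha><3. Q p \<alpha> * tvec S Q d p \<alpha>))"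
proof -
  let ?face = "\<lambda>a. \<Sum>p\<in>{p\<in>grid S. coord d p = a}. hother S d p * (\<Sum>\<alpha><3. Q p \<alpha> * flux S Q d p \<alpha>)"
  have face: "?face a = face_int S d a (\<lambda>p. \<Sum>\<alpha><3. Q p \<alpha> * tvec S Q d p \<alpha>)" for a
    unfolding face_int_def using adm by (intro sum.cong refl) (auto simp: flux_pairing mnorm_pos)
  have "(\<Sum>p\<in>grid S. hprod S p * (\<Sum>c<9. Q p c * (applyD S (Dm S d) d (\<lambda>q. flux S Q d q c) p + Bterm S Q d p c)))
      = (\<Sum>\<alpha><3. \<Sum>p\<in>grid S. hprod S p * (Q p \<alpha> * applyD S (Dm S d) d (\<lambda>q. flux S Q d q \<alpha>) p
                                          + flux S Q d p \<alpha> * applyD S (Dp S d) d (\<lambda>q. Q q \<alpha>) p))"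
    by (simp only: pairing_flux_nonconservative sum_distrib_left) (rule sum.swap)
  also have "\<dots> = (\<Sum>\<alpha><3. (\<Sum>p\<in>{p\<in>grid S. coord d p = nn S d}. hother S d p * (Q p \<alpha> * flux S Q d p \<alpha>))
                          - (\<Sum>p\<in>{p\<in>grid S. coord d p = 0}. hother S d p * (Q p \<alpha> * flux S Q d p \<alpha>)))"
    by (rule sum.cong[OF refl], rule grid_summation_by_parts[OF adm])
  also have "\<dots> = ?face (nn S d) - ?face 0"
    by (simp add: sum_subtractf sum_distrib_left sum.swap[of _ "{..<3::nat}"])
  finally show ?thesis
    using adm by (simp add: face sum_faces outward_nn)
qed

lemma sat_rate:
  assumes adm: "admissible S" and a: "a \<le> nn S d"
  shows "(\<Sum>p\<in>grid S. hprod S p * (\<Sum>c<9. Q p c * sat S Q d a p c))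
     = - face_int S d a (\<lambda>p. \<Sum>c<9. Q p c * svec S Q d a p c)"
proof -
  have "(\<Sum>p\<in>grid S. hprod S p * (\<Sum>c<9. Q p c * sat S Q d a p c))
      = (\<Sum>p\<in>grid S. if coord d p = a
            then - (hother S d p * Jac S p * mnorm S d p * (\<Sum>c<9. Q p c * svec S Q d a p c)) else 0)"
    using admissible_hh_pos[OF adm a]
    by (intro sum.cong refl)
       (auto simp: hprod_eq_hh_hother[of S _ d] sat_def sum_distrib_left sum_negf field_simps)
  also have "\<dots> = - face_int S d a (\<lambda>p. \<Sum>c<9. Q p c * svec S Q d a p c)"
    unfolding face_int_def
    by (simp add: sum.inter_filter[OF finite_grid] sum_negf[symmetric] if_distrib cong: if_cong)
  finally show ?thesis .
qed

section \<open>The energy balance on a face\<close>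

lemma svec_pairing:
  "(\<Sum>c<9. Q p c * svec S Q d a p c)
    = (\<Sum>\<eta><3. Gpen S Q d a p \<eta> * vrot S Q d a p \<eta>)
      + outward a * (\<Sum>\<eta><3. Gtil S Q d a p \<eta> * trot S Q d a p \<eta>)"
proof -
  have "(\<Sum>c<9. Q p c * svec S Q d a p c)
      = (\<Sum>\<alpha><3. Q p \<alpha> * Gcart S Q d a p \<alpha>) + outward a * (\<Sum>\<alpha><3. Gtcart S Q d a p \<alpha> * tvec S Q d p \<alpha>)"
    by (simp add: sum_lessThan_9 sum_lessThan_3 svec_def tvec_def outward_def Let_def algebra_simps)
  also have "\<dots> = (\<Sum>\<eta><3. Gpen S Q d a p \<eta> * vrot S Q d a p \<eta>)
      + outward a * (\<Sum>\<eta><3. Gtil S Q d a p \<eta> * trot S Q d a p \<eta>)"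
    by (simp add: sum_lessThan_3 Gcart_def Gtcart_def vrot_def trot_def algebra_simps)
  finally show ?thesis .
qed

lemma traction_power_rotated:
  assumes "\<And>\<eta> \<eta>'. \<eta> < 3 \<Longrightarrow> \<eta>' < 3 \<Longrightarrow>
             (\<Sum>c<3. frame S d a p \<eta> c * frame S d a p \<eta>' c) = (if \<eta> = \<eta>' then 1 else 0)"
  shows "(\<Sum>\<alpha><3. Q p \<alpha> * tvec S Q d p \<alpha>) = (\<Sum>\<eta><3. vrot S Q d a p \<eta> * trot S Q d a p \<eta>)"
  unfolding vrot_def trot_def by (rule sum_prod_orthonormal_rows[symmetric]) (rule assms)

text \<open>Here \<open>\<sigma> = \<plusminus>1\<close> is the orientation of the face and \<open>c\<close> the characteristic variable
  (\<open>q\<^sub>\<eta>\<close> at index \<open>0\<close>, \<open>p\<^sub>\<eta>\<close> at index \<open>n\<^sub>\<xi>\<close>).\<close>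

lemma penalty_power_identity:
  fixes \<sigma> Z g v T c vh Th G :: real
  assumes \<sigma>: "\<sigma> = -1 \<or> \<sigma> = 1" and Z: "Z \<noteq> 0"
    and c: "c = (Z * v - \<sigma> * T) / 2" and vh: "vh = (1 + g) * c / Z" and Th: "Th = - \<sigma> * ((1 - g) * c)"
    and G: "G = Z * (v - vh) / 2 + \<sigma> * (T - Th) / 2"
  shows "\<sigma> * (v * T) - (G * v + \<sigma> * (G / Z * T)) = \<sigma> * (vh * Th) - G\<^sup>2 / Z"
proof -
  have v: "v = (2 * c + \<sigma> * T) / Z"
    using c Z by (simp add: field_simps)
  have G': "G = (1 - g) * c + \<sigma> * T"
    using \<sigma> Z by (auto simp: G vh Th v field_simps)
  show ?thesis
    using \<sigma> Z unfolding G' v vh Th by (auto simp: field_simps power2_eq_square; simp add: algebra_simps)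
qed

lemma penalty_product_sign:
  fixes \<sigma> Z g c vh Th :: real
  assumes \<sigma>: "\<sigma> = -1 \<or> \<sigma> = 1" and "0 < Z" "-1 \<le> g" "g \<le> 1"
    and vh: "vh = (1 + g) * c / Z" and Th: "Th = - \<sigma> * ((1 - g) * c)"
  shows "\<sigma> * (vh * Th) \<le> 0"
proof -
  have "\<sigma> * (vh * Th) = - ((1 + g) * (1 - g) * c\<^sup>2 / Z)"
    using \<sigma> by (auto simp: vh Th power2_eq_square)
  moreover have "0 \<le> (1 + g) * (1 - g) * c\<^sup>2 / Z"
    using assms(2-4) by simp
  ultimately show ?thesis
    by linarith
qed

lemma charv_eq:
  "charv S Q d a p \<eta> = (Zi S d a p \<eta> * vrot S Q d a p \<eta> - outward a * trot S Q d a p \<eta>) / 2"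
  by (simp add: charv_def outward_def)

lemma That_eq: "That S Q d a p \<eta> = - outward a * ((1 - gam S d a p \<eta>) * charv S Q d a p \<eta>)"
  by (simp add: That_def outward_def)

lemma Gpen_eq:
  "Gpen S Q d a p \<eta> = Zi S d a p \<eta> * (vrot S Q d a p \<eta> - vhat S Q d a p \<eta>) / 2
                       + outward a * (trot S Q d a p \<eta> - That S Q d a p \<eta>) / 2"
  by (auto simp: Gpen_def outward_def field_simps)

definition face_energy_rate :: "setting \<Rightarrow> (pt \<Rightarrow> nat \<Rightarrow> real) \<Rightarrow> dir \<Rightarrow> nat \<Rightarrow> pt \<Rightarrow> real" where
  "face_energy_rate S Q d a p =
     (\<Sum>\<eta><3. outward a * (vhat S Q d a p \<eta> * That S Q d a p \<eta>) - (Gpen S Q d a p \<eta>)\<^sup>2 / Zi S d a p \<eta>)"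

lemma face_energy_rate_eq:
  assumes adm: "admissible S" and p: "a \<in> {0, nn S d}" "p \<in> grid S" "coord d p = a"
  shows "outward a * (\<Sum>\<alpha><3. Q p \<alpha> * tvec S Q d p \<alpha>) - (\<Sum>c<9. Q p c * svec S Q d a p c)
    = face_energy_rate S Q d a p"
proof -
  have "outward a * (\<Sum>\<alpha><3. Q p \<alpha> * tvec S Q d p \<alpha>) - (\<Sum>c<9. Q p c * svec S Q d a p c)
      = (\<Sum>\<eta><3. outward a * (vrot S Q d a p \<eta> * trot S Q d a p \<eta>)
               - (Gpen S Q d a p \<eta> * vrot S Q d a p \<eta>
                  + outward a * (Gpen S Q d a p \<eta> / Zi S d a p \<eta> * trot S Q d a p \<eta>)))"
    by (simp add: traction_power_rotated[OF admissible_frame[OF adm p]] svec_pairing Gtil_def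
                  sum_distrib_left sum_subtractf sum.distrib)
  also have "\<dots> = face_energy_rate S Q d a p"
    unfolding face_energy_rate_def
  proof (intro sum.cong refl)
    fix \<eta> :: nat assume "\<eta> \<in> {..<3}"
    then have "0 < Zi S d a p \<eta>"
      using admissible_impedance[OF adm p] by simp
    then show "outward a * (vrot S Q d a p \<eta> * trot S Q d a p \<eta>)
               - (Gpen S Q d a p \<eta> * vrot S Q d a p \<eta>
                  + outward a * (Gpen S Q d a p \<eta> / Zi S d a p \<eta> * trot S Q d a p \<eta>))
        = outward a * (vhat S Q d a p \<eta> * That S Q d a p \<eta>) - (Gpen S Q d a p \<eta>)\<^sup>2 / Zi S d a p \<eta>"
      by (intro penalty_power_identity[OF outward_cases, where c = "charv S Q d a p \<eta>" and g = "gam S d a p \<eta>"])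
         (simp_all add: charv_eq vhat_def That_eq Gpen_eq)
  qed
  finally show ?thesis .
qed

lemma face_energy_rate_nonpos:
  assumes adm: "admissible S" and p: "a \<in> {0, nn S d}" "p \<in> grid S" "coord d p = a"
  shows "face_energy_rate S Q d a p \<le> 0"
  unfolding face_energy_rate_def
proof (rule sum_nonpos)
  fix \<eta> :: nat assume "\<eta> \<in> {..<3}"
  then have Z: "0 < Zi S d a p \<eta>" "-1 \<le> gam S d a p \<eta>" "gam S d a p \<eta> \<le> 1"
    using admissible_impedance[OF adm p] by auto
  have "outward a * (vhat S Q d a p \<eta> * That S Q d a p \<eta>) \<le> 0"
    by (rule penalty_product_sign[OF outward_cases Z, where c = "charv S Q d a p \<eta>"])
       (simp_all add: vhat_def That_eq)
  moreover have "0 \<le> (Gpen S Q d a p \<eta>)\<^sup>2 / Zi S d a p \<eta>"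
    using Z by simp
  ultimately show "outward a * (vhat S Q d a p \<eta> * That S Q d a p \<eta>) - (Gpen S Q d a p \<eta>)\<^sup>2 / Zi S d a p \<eta> \<le> 0"
    by linarith
qed

lemma direction_energy_rate:
  assumes adm: "admissible S"
  shows "(\<Sum>p\<in>grid S. hprod S p * (\<Sum>c<9. Q p c *
            (applyD S (Dm S d) d (\<lambda>q. flux S Q d q c) p + Bterm S Q d p c
             + sat S Q d 0 p c + sat S Q d (nn S d) p c)))
    = (\<Sum>a\<in>{0, nn S d}. face_int S d a (face_energy_rate S Q d a))"
proof -
  let ?T = "\<lambda>p. \<Sum>\<alpha><3. Q p \<alpha> * tvec S Q d p \<alpha>" and ?S = "\<lambda>a p. \<Sum>c<9. Q p c * svec S Q d a p c"
  have "(\<Sum>p\<in>grid S. hprod S p * (\<Sum>c<9. Q p c *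
            (applyD S (Dm S d) d (\<lambda>q. flux S Q d q c) p + Bterm S Q d p c
             + sat S Q d 0 p c + sat S Q d (nn S d) p c)))
      = (\<Sum>p\<in>grid S. hprod S p * (\<Sum>c<9. Q p c * (applyD S (Dm S d) d (\<lambda>q. flux S Q d q c) p + Bterm S Q d p c)))
        + (\<Sum>p\<in>grid S. hprod S p * (\<Sum>c<9. Q p c * sat S Q d 0 p c))
        + (\<Sum>p\<in>grid S. hprod S p * (\<Sum>c<9. Q p c * sat S Q d (nn S d) p c))"
    by (simp add: distrib_left sum.distrib)
  also have "\<dots> = (\<Sum>a\<in>{0, nn S d}. outward a * face_int S d a ?T - face_int S d a (?S a))"
    by (simp add: volume_rate[OF adm] sat_rate[OF adm] sum_faces[OF adm])
  also have "\<dots> = (\<Sum>a\<in>{0, nn S d}. face_int S d a (\<lambda>p. outward a * ?T p - ?S a p))"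
    by (simp add: face_int_diff face_int_cmult)
  also have "\<dots> = (\<Sum>a\<in>{0, nn S d}. face_int S d a (face_energy_rate S Q d a))"
    by (intro sum.cong refl face_int_cong face_energy_rate_eq[OF adm]) auto
  finally show ?thesis .
qed

lemma energy_rate_eq_face_rates:
  assumes adm: "admissible S"
  shows "(\<Sum>p\<in>grid S. hprod S p * (\<Sum>c<9. Q p c * rhs S Q p c))
    = sumdir (\<lambda>d. \<Sum>a\<in>{0, nn S d}. face_int S d a (face_energy_rate S Q d a))"
proof -
  have split: "\<And>x y z. (\<Sum>p\<in>grid S. hprod S p * (\<Sum>c<9. Q p c * (x p c + y p c + z p c)))
      = (\<Sum>p\<in>grid S. hprod S p * (\<Sum>c<9. Q p c * x p c))
        + (\<Sum>p\<in>grid S. hprod S p * (\<Sum>c<9. Q p c * y p c))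
        + (\<Sum>p\<in>grid S. hprod S p * (\<Sum>c<9. Q p c * z p c))"
    by (simp add: distrib_left sum.distrib)
  show ?thesis
    unfolding rhs_def sumdir_def by (subst split) (simp only: direction_energy_rate[OF adm])
qed

lemma Fluc_plus_bdry_eq_face_rates:
  assumes adm: "admissible S"
  shows "Fluc S Q + bdry S Q = sumdir (\<lambda>d. \<Sum>a\<in>{0, nn S d}. face_int S d a (face_energy_rate S Q d a))"
proof -
  have "face_int S d a (face_energy_rate S Q d a)
      = outward a * face_int S d a (\<lambda>p. \<Sum>\<eta><3. vhat S Q d a p \<eta> * That S Q d a p \<eta>)
        - face_int S d a (\<lambda>p. \<Sum>\<eta><3. (Gpen S Q d a p \<eta>)\<^sup>2 / Zi S d a p \<eta>)" for d a
    unfolding face_energy_rate_def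
    by (simp add: sum_subtractf face_int_diff face_int_cmult flip: sum_distrib_left)
  then show ?thesis
    by (simp add: Fluc_def bdry_def sumdir_def sum_faces[OF adm] outward_nn[OF adm])
qed

lemma Fluc_nonpos:
  assumes adm: "admissible S"
  shows "Fluc S Q \<le> 0"
proof -
  have "0 \<le> (\<Sum>a\<in>{0, nn S d}. face_int S d a (\<lambda>p. \<Sum>\<eta><3. (Gpen S Q d a p \<eta>)\<^sup>2 / Zi S d a p \<eta>))" for d
    using admissible_impedance[OF adm]
    by (intro sum_nonneg face_int_nonneg[OF adm]) (auto intro!: divide_nonneg_pos)
  from this[of Dq] this[of Dr] this[of Ds] show ?thesis
    unfolding Fluc_def sumdir_def by linarith
qed

lemma Fluc_plus_bdry_nonpos:
  assumes adm: "admissible S"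
  shows "Fluc S Q + bdry S Q \<le> 0"
proof -
  have "(\<Sum>a\<in>{0, nn S d}. face_int S d a (face_energy_rate S Q d a)) \<le> 0" for d
    by (intro sum_nonpos face_int_nonpos[OF adm] face_energy_rate_nonpos[OF adm]) auto
  from this[of Dq] this[of Dr] this[of Ds] show ?thesis
    unfolding Fluc_plus_bdry_eq_face_rates[OF adm] sumdir_def by linarith
qed

lemma pinv_pairing_symmetric:
  assumes sym: "\<And>a b. a < 6 \<Longrightarrow> b < 6 \<Longrightarrow> Sc S p a b = Sc S p b a"
  shows "(\<Sum>c<9. X c * pinv S p Y c) = (\<Sum>c<9. Y c * pinv S p X c)"
proof -
  have expand: "(\<Sum>c<9. X c * pinv S p Y c) = Jac S p * rho S p * (\<Sum>c<3. X c * Y c)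
      + Jac S p * (\<Sum>a<6. \<Sum>b<6. X (3 + a) * Sc S p a b * Y (3 + b))" for X Y
    by (simp add: sum_lessThan_9 sum_lessThan_3 sum_lessThan_6 pinv_def algebra_simps)
  have "(\<Sum>a<6. \<Sum>b<6. Y (3 + a) * Sc S p a b * X (3 + b))
      = (\<Sum>a<6. \<Sum>b<6. X (3 + b) * Sc S p b a * Y (3 + a))"
    by (intro sum.cong refl) (simp add: sym)
  also have "\<dots> = (\<Sum>a<6. \<Sum>b<6. X (3 + a) * Sc S p a b * Y (3 + b))"
    by (rule sum.swap)
  finally show ?thesis
    unfolding expand by (simp add: mult.commute)
qed

lemma has_real_derivative_pinv:
  assumes "\<And>c. c < 9 \<Longrightarrow> ((\<lambda>s. X s c) has_real_derivative X' c) (at t)"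
  shows "((\<lambda>s. pinv S p (X s) c) has_real_derivative pinv S p X' c) (at t)"
  unfolding pinv_def using assms by (auto intro!: DERIV_cmult DERIV_sum)

lemma energy_has_derivative:
  assumes adm: "admissible S"
    and deriv: "\<And>p c. p \<in> grid S \<Longrightarrow> c < 9 \<Longrightarrow> ((\<lambda>s. Q s p c) has_real_derivative Q' p c) (at t)"
  shows "((\<lambda>s. energy S (Q s)) has_real_derivative
            (\<Sum>p\<in>grid S. hprod S p * (\<Sum>c<9. Q t p c * pinv S p (Q' p) c))) (at t)"
proof -
  have "((\<lambda>s. energy S (Q s)) has_real_derivative (1/2) * (\<Sum>p\<in>grid S. hprod S p *
           (\<Sum>c<9. Q' p c * pinv S p (Q t p) c + pinv S p (Q' p) c * Q t p c))) (at t)"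
    unfolding energy_def
    by (intro DERIV_cmult DERIV_sum DERIV_mult deriv has_real_derivative_pinv) auto
  moreover have "(\<Sum>c<9. Q' p c * pinv S p (Q t p) c + pinv S p (Q' p) c * Q t p c)
      = 2 * (\<Sum>c<9. Q t p c * pinv S p (Q' p) c)" if "p \<in> grid S" for p
    using pinv_pairing_symmetric[OF admissible_Sc_sym[OF adm that], of "Q' p" "Q t p"]
    by (simp add: sum.distrib mult.commute)
  ultimately show ?thesis
    by (simp add: sum_distrib_left cong: sum.cong)
qed

theorem theorem5p2:
  fixes S :: setting and Q Q' :: "real \<Rightarrow> pt \<Rightarrow> nat \<Rightarrow> real" and T :: "real set"
  assumes adm: "admissible S"
    and diff: "\<forall>t\<in>T. \<forall>p\<in>grid S. \<forall>c<9. ((\<lambda>s. Q s p c) has_real_derivative Q' t p c) (at t)"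
    and ode: "\<forall>t\<in>T. \<forall>p\<in>grid S. \<forall>c<9. pinv S p (Q' t p) c = rhs S (Q t) p c"
  shows "\<forall>t\<in>T. ((\<lambda>s. energy S (Q s)) has_real_derivative (Fluc S (Q t) + bdry S (Q t))) (at t)
              \<and> Fluc S (Q t) + bdry S (Q t) \<le> 0 \<and> Fluc S (Q t) \<le> 0"
proof
  fix t assume t: "t \<in> T"
  have "((\<lambda>s. energy S (Q s)) has_real_derivative
           (\<Sum>p\<in>grid S. hprod S p * (\<Sum>c<9. Q t p c * pinv S p (Q' t p) c))) (at t)"
    using diff t by (intro energy_has_derivative[OF adm]) auto
  also have "(\<Sum>p\<in>grid S. hprod S p * (\<Sum>c<9. Q t p c * pinv S p (Q' t p) c))
      = (\<Sum>p\<in>grid S. hprod S p * (\<Sum>c<9. Q t p c * rhs S (Q t) p c))"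
    using ode t by (simp cong: sum.cong_simp)
  also have "\<dots> = Fluc S (Q t) + bdry S (Q t)"
    by (simp add: energy_rate_eq_face_rates[OF adm] Fluc_plus_bdry_eq_face_rates[OF adm])
  finally show "((\<lambda>s. energy S (Q s)) has_real_derivative (Fluc S (Q t) + bdry S (Q t))) (at t)
              \<and> Fluc S (Q t) + bdry S (Q t) \<le> 0 \<and> Fluc S (Q t) \<le> 0"
    using Fluc_plus_bdry_nonpos[OF adm] Fluc_nonpos[OF adm] by blast
qed

end
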